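(* Let $K$ be a field of characteristic zero, let $(p_n(x))_{n\ge0}$ be a sequence of polynomials in $K[x]$ with $\deg p_n=n$, and let $F^{(y)}:K[x]\to K[x,y]$ be a $K$-linear operator with $F^{(y)}p_n(x)=\sum_{k=0}^np_k(x)p_{n-k}(y)$ for all $n\ge0$. Identify $K[x,y]$ with $K[x]\otimes K[x]$ via $x^iy^j\mapsto x^i\otimes x^j$, and let $\epsilon:K[x]\to K$ be the linear map with $\epsilon p_n=\delta_{n0}$, so that $(K[x],F^{(y)},\epsilon)$ is a coalgebra. Suppose this coalgebra is a bialgebra with respect to the usual multiplication of polynomials. Then there is a constant $c\in K$ such that $F^{(y)}=E^{y-c}$, i.e. $F^{(y)}p(x)=p(x+y-c)$; consequently $(p_n(x))_{n\ge0}$ is a Sheffer sequence; the counit $\epsilon$ is evaluation at $x=c$; and this bialgebra is a Hopf algebra with antipode $\omega:(x-c)^n\mapsto(-1)^n(x-c)^n$.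
   Context: A coalgebra $(V,\Delta,\epsilon)$ has comultiplication $\Delta:V\to V\otimes V$ and counit $\epsilon:V\to K$ satisfying $(I\otimes\Delta)\Delta=(\Delta\otimes I)\Delta$ and $(\epsilon\otimes I)\Delta=I=(I\otimes\epsilon)\Delta$; it is a bialgebra with respect to a multiplication if $\Delta$ and $\epsilon$ are unital algebra homomorphisms. A sequence $(s_n(x))$ with $\deg s_n=n$ is Sheffer if there is a divided power sequence $(q_n)$ (i.e. $\deg q_n=n$ and $q_n(x+y)=\sum_{k}q_k(x)q_{n-k}(y)$) with $s_n(x+y)=\sum_{k=0}^nq_{n-k}(y)s_k(x)$ for all $n$. *)

theory Defs
  imports "HOL-Computational_Algebra.Polynomial"
begin

text \<open>Convention: K[x,y] is represented as 'a poly poly, the outer variable being y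
  and the coefficients being polynomials in x.  Under the identification
  x^i y^j = x^i \<otimes> x^j, the left tensor factor is the inner (x) variable and the right
  tensor factor is the outer (y) variable.\<close>

definition lift_x :: "'a::comm_ring_1 poly \<Rightarrow> 'a poly poly" where
  "lift_x p = [:p:]"

definition lift_y :: "'a::comm_ring_1 poly \<Rightarrow> 'a poly poly" where
  "lift_y p = map_poly (\<lambda>a. [:a:]) p"

definition shift_xy :: "'a::comm_ring_1 \<Rightarrow> 'a poly \<Rightarrow> 'a poly poly" where
  "shift_xy c p = poly (map_poly (\<lambda>a. [:[:a:]:]) p) [:[:-c, 1:], 1:]"
  \<comment> \<open>p(x + y - c) in K[x,y]\<close>

definition divided_power_seq :: "(nat \<Rightarrow> 'a::comm_ring_1 poly) \<Rightarrow> bool" where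
  "divided_power_seq q \<longleftrightarrow> (\<forall>n. degree (q n) = n) \<and>
     (\<forall>n. shift_xy 0 (q n) = (\<Sum>k\<le>n. lift_x (q k) * lift_y (q (n - k))))"

definition sheffer :: "(nat \<Rightarrow> 'a::comm_ring_1 poly) \<Rightarrow> bool" where
  "sheffer s \<longleftrightarrow> (\<forall>n. degree (s n) = n) \<and>
     (\<exists>q. divided_power_seq q \<and>
        (\<forall>n. shift_xy 0 (s n) = (\<Sum>k\<le>n. lift_y (q (n - k)) * lift_x (s k))))"

text \<open>Multiplication map m : K[x] \<otimes> K[x] \<rightarrow> K[x] composed with (S \<otimes> I) resp. (I \<otimes> S).\<close>

definition mult_S_id :: "('a::comm_ring_1 poly \<Rightarrow> 'a poly) \<Rightarrow> 'a poly poly \<Rightarrow> 'a poly" where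
  "mult_S_id S P = (\<Sum>j\<le>degree P. S (coeff P j) * monom 1 j)"

definition mult_id_S :: "('a::comm_ring_1 poly \<Rightarrow> 'a poly) \<Rightarrow> 'a poly poly \<Rightarrow> 'a poly" where
  "mult_id_S S P = (\<Sum>j\<le>degree P. coeff P j * S (monom 1 j))"

definition is_antipode ::
  "('a::comm_ring_1 poly \<Rightarrow> 'a poly poly) \<Rightarrow> ('a poly \<Rightarrow> 'a) \<Rightarrow> ('a poly \<Rightarrow> 'a poly) \<Rightarrow> bool" where
  "is_antipode Delta eps S \<longleftrightarrow>
     (\<forall>q. mult_S_id S (Delta q) = [:eps q:] \<and> mult_id_S S (Delta q) = [:eps q:])"

end

theory Submission
  imports Defs
begin

text \<open>Since F and eps are unital algebra maps, they are determined by their values at x.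
  The counit forces p_0 = 1, so F p_1 = p_1(x) + p_1(y); writing p_1 = a (x - c), this says that
  x - c is primitive, whence F x = x + y - c, while eps p_1 = 0 gives eps x = c.  For F the shift
  by y - c, the polynomials q_n(x) = p_n(x + c) form a divided power sequence exhibiting p as a
  Sheffer sequence.  For the antipode, the coproduct of (x - c)^n is binomial and
  omega((x - c)^k) = (-(x - c))^k, so both antipode sums become binomial expansions of
  ((x - c) - (x - c))^n, which is the counit of (x - c)^n; linearity extends this to all
  polynomials.  Identities in K[x,y] are verified pointwise on K^2, which suffices as K is
  infinite.\<close>

definition poly2 :: "'a::comm_semiring_0 poly poly \<Rightarrow> 'a \<Rightarrow> 'a \<Rightarrow> 'a" where
  "poly2 P x y = poly (poly P [:y:]) x"

lemma poly2_add [simp]: "poly2 (P + Q) x y = poly2 P x y + poly2 Q x y"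
  by (simp add: poly2_def)

lemma poly2_mult [simp]: "poly2 (P * Q) x y = poly2 P x y * poly2 Q x y"
  by (simp add: poly2_def)

lemma poly2_sum [simp]: "poly2 (\<Sum>i\<in>A. P i) x y = (\<Sum>i\<in>A. poly2 (P i) x y)"
  by (simp add: poly2_def poly_sum)

lemma poly2_smult [simp]: "poly2 (smult [:a:] P) x y = a * poly2 P x y"
  by (simp add: poly2_def)

lemma poly2_lift_x [simp]: "poly2 (lift_x p) x y = poly p x"
  by (simp add: poly2_def lift_x_def)

lemma poly2_lift_y [simp]: "poly2 (lift_y p) x y = poly p y"
  by (induction p) (simp_all add: poly2_def lift_y_def map_poly_pCons)

lemma poly2_shift_xy [simp]: "poly2 (shift_xy c p) x y = poly p (x + y - c)"
  by (induction p) (simp_all add: poly2_def shift_xy_def map_poly_pCons algebra_simps)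

lemma coeff_poly_at_const: "coeff (poly P [:y:]) i = poly (map_poly (\<lambda>a. coeff a i) P) y"
  by (induction P) (simp_all add: map_poly_pCons)

lemma poly2_eqI:
  fixes P Q :: "'a::{idom,ring_char_0} poly poly"
  assumes "\<And>x y. poly2 P x y = poly2 Q x y"
  shows "P = Q"
proof (rule poly_eqI)+
  fix i j
  have "poly P [:y:] = poly Q [:y:]" for y
    using assms by (simp add: poly2_def poly_eq_poly_eq_iff[symmetric] fun_eq_iff)
  then have "poly (map_poly (\<lambda>a. coeff a i) P) = poly (map_poly (\<lambda>a. coeff a i) Q)"
    by (simp add: coeff_poly_at_const[symmetric] fun_eq_iff)
  then have "map_poly (\<lambda>a. coeff a i) P = map_poly (\<lambda>a. coeff a i) Q"
    by (simp add: poly_eq_poly_eq_iff)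
  then show "coeff (coeff P j) i = coeff (coeff Q j) i"
    by (metis coeff_0 coeff_map_poly)
qed

lemma lift_x_1 [simp]: "lift_x 1 = 1"
  by (simp add: lift_x_def one_pCons)

lemma lift_y_1 [simp]: "lift_y 1 = 1"
  by (simp add: lift_y_def one_pCons map_poly_pCons)

lemma lift_x_smult [simp]: "lift_x (smult a p) = smult [:a:] (lift_x p)"
  by (simp add: lift_x_def)

lemma lift_y_smult [simp]: "lift_y (smult a p) = smult [:a:] (lift_y p)"
  by (simp add: lift_y_def map_poly_smult)

lemma shift_xy_add [simp]:
  fixes f g :: "'a::{idom,ring_char_0} poly"
  shows "shift_xy c (f + g) = shift_xy c f + shift_xy c g"
  by (rule poly2_eqI) simp

lemma shift_xy_smult [simp]:
  fixes f :: "'a::{idom,ring_char_0} poly"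
  shows "shift_xy c (smult a f) = smult [:a:] (shift_xy c f)"
  by (rule poly2_eqI) simp

lemma shift_xy_power_binomial:
  fixes c :: "'a::{idom,ring_char_0}"
  shows "shift_xy c ([:-c, 1:] ^ n) =
    (\<Sum>k\<le>n. lift_x (of_nat (n choose k) * [:-c, 1:] ^ k) * lift_y ([:-c, 1:] ^ (n - k)))"
proof (rule poly2_eqI)
  fix x y
  show "poly2 (shift_xy c ([:-c, 1:] ^ n)) x y =
    poly2 (\<Sum>k\<le>n. lift_x (of_nat (n choose k) * [:-c, 1:] ^ k) * lift_y ([:-c, 1:] ^ (n - k))) x y"
    using binomial_ring[of "x - c" "y - c" n] by (simp add: poly_power algebra_simps)
qed

lemma poly_hom_eq_poly_map_poly:
  fixes F :: "'a::comm_ring_1 poly \<Rightarrow> 'b::comm_ring_1"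
  assumes add: "\<And>f g. F (f + g) = F f + F g"
    and mult: "\<And>f g. F (f * g) = F f * F g"
    and const: "\<And>a. F [:a:] = h a"
  shows "F f = poly (map_poly h f) (F [:0, 1:])"
proof -
  have "h 0 = 0"
    using add[of 0 0] const[of 0] by simp
  then show ?thesis
  proof (induction f)
    case 0
    then show ?case
      using const[of 0] by simp
  next
    case (pCons a f)
    have "F (pCons a f) = F ([:a:] + [:0, 1:] * f)"
      by simp
    also have "\<dots> = h a + F [:0, 1:] * poly (map_poly h f) (F [:0, 1:])"
      by (simp only: add mult const pCons)
    also have "\<dots> = poly (map_poly h (pCons a f)) (F [:0, 1:])"
      by (simp add: map_poly_pCons pCons.prems)
    finally show ?case .
  qed
qed

lemma poly_hom_eq_shift_xy:
  fixes F :: "'a::comm_ring_1 poly \<Rightarrow> 'a poly poly"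
  assumes add: "\<And>f g. F (f + g) = F f + F g"
    and mult: "\<And>f g. F (f * g) = F f * F g"
    and const: "\<And>a. F [:a:] = [:[:a:]:]"
    and primitive: "F [:-c, 1:] = lift_x [:-c, 1:] + lift_y [:-c, 1:]"
  shows "F f = shift_xy c f"
proof -
  have "F [:-c, 1:] = [:[:-c:]:] + F [:0, 1:]"
    using add[of "[:-c:]" "[:0, 1:]"] const by simp
  moreover have "lift_x [:-c, 1:] + lift_y [:-c, 1:] = [:[:-c:]:] + [:[:-c, 1:], 1:]"
    by (simp add: lift_x_def lift_y_def map_poly_pCons)
  ultimately have "[:[:-c:]:] + F [:0, 1:] = [:[:-c:]:] + [:[:-c, 1:], 1:]"
    using primitive by (simp only:)
  then have F_x: "F [:0, 1:] = [:[:-c, 1:], 1:]"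
    by (simp only: add_left_cancel)
  show ?thesis
    unfolding shift_xy_def F_x[symmetric] by (rule poly_hom_eq_poly_map_poly[OF add mult const])
qed

lemma poly_hom_eq_poly:
  fixes eps :: "'a::comm_ring_1 poly \<Rightarrow> 'a"
  assumes add: "\<And>f g. eps (f + g) = eps f + eps g"
    and mult: "\<And>f g. eps (f * g) = eps f * eps g"
    and const: "\<And>a. eps [:a:] = a"
    and root: "eps [:-c, 1:] = 0"
  shows "eps f = poly f c"
proof -
  have "eps [:-c, 1:] = -c + eps [:0, 1:]"
    using add[of "[:-c:]" "[:0, 1:]"] const by simp
  then have "eps [:0, 1:] = c"
    using root by simp
  then show ?thesis
    using poly_hom_eq_poly_map_poly[of eps "\<lambda>a. a" f, OF add mult const] by simp
qed

lemma degree1_smult_linear: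
  fixes q :: "'a::field poly"
  assumes "degree q = 1"
  obtains a c where "a \<noteq> 0" "q = smult a [:-c, 1:]"
proof -
  obtain b a where "q = [:b, a:]" "a \<noteq> 0"
    using degree1_coeffs[OF assms] .
  then have "q = smult a [:-(- b / a), 1:]"
    by simp
  with \<open>a \<noteq> 0\<close> show thesis
    by (rule that)
qed

lemma sheffer_if_shift_xy_expansion:
  fixes p :: "nat \<Rightarrow> 'a::{idom,ring_char_0} poly"
  assumes deg: "\<And>n. degree (p n) = n"
    and expansion: "\<And>n. shift_xy c (p n) = (\<Sum>k\<le>n. lift_x (p k) * lift_y (p (n - k)))"
  shows "sheffer p"
proof -
  define q where "q n = pcompose (p n) [:c, 1:]" for n
  have p_add: "poly (p n) (x + y - c) = (\<Sum>k\<le>n. poly (p k) x * poly (p (n - k)) y)" for n x y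
    using arg_cong[OF expansion, of "\<lambda>P. poly2 P x y"] by simp
  have "divided_power_seq q"
    unfolding divided_power_seq_def
  proof (intro conjI allI)
    show "degree (q n) = n" for n
      by (simp add: q_def degree_pcompose deg)
    show "shift_xy 0 (q n) = (\<Sum>k\<le>n. lift_x (q k) * lift_y (q (n - k)))" for n
    proof (rule poly2_eqI)
      fix x y
      have "poly2 (shift_xy 0 (q n)) x y = poly (p n) ((x + c) + (y + c) - c)"
        by (simp add: q_def poly_pcompose algebra_simps)
      also have "\<dots> = (\<Sum>k\<le>n. poly (p k) (x + c) * poly (p (n - k)) (y + c))"
        by (rule p_add)
      also have "\<dots> = poly2 (\<Sum>k\<le>n. lift_x (q k) * lift_y (q (n - k))) x y"
        by (simp add: q_def poly_pcompose algebra_simps)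
      finally show "poly2 (shift_xy 0 (q n)) x y =
          poly2 (\<Sum>k\<le>n. lift_x (q k) * lift_y (q (n - k))) x y" .
    qed
  qed
  moreover have "shift_xy 0 (p n) = (\<Sum>k\<le>n. lift_y (q (n - k)) * lift_x (p k))" for n
  proof (rule poly2_eqI)
    fix x y
    have "poly2 (shift_xy 0 (p n)) x y = poly (p n) (x + (y + c) - c)"
      by simp
    also have "\<dots> = (\<Sum>k\<le>n. poly (p k) x * poly (p (n - k)) (y + c))"
      by (rule p_add)
    also have "\<dots> = poly2 (\<Sum>k\<le>n. lift_y (q (n - k)) * lift_x (p k)) x y"
      by (simp add: q_def poly_pcompose algebra_simps)
    finally show "poly2 (shift_xy 0 (p n)) x y =
        poly2 (\<Sum>k\<le>n. lift_y (q (n - k)) * lift_x (p k)) x y" .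
  qed
  ultimately show ?thesis
    unfolding sheffer_def using deg by blast
qed

definition poly_linear :: "('a::comm_ring_1 poly \<Rightarrow> 'a poly) \<Rightarrow> bool" where
  "poly_linear S \<longleftrightarrow>
    (\<forall>f g. S (f + g) = S f + S g) \<and> (\<forall>a f. S (smult a f) = smult a (S f))"

lemma poly_linear_0:
  assumes "poly_linear S"
  shows "S 0 = 0"
  using assms unfolding poly_linear_def by (metis add_cancel_right_right)

lemma poly_linear_sum:
  assumes "poly_linear S"
  shows "S (\<Sum>i\<in>A. smult (a i) (f i)) = (\<Sum>i\<in>A. smult (a i) (S (f i)))"
  using assms by (induction A rule: infinite_finite_induct)
    (simp_all add: poly_linear_0 poly_linear_def)

lemma pcompose_eq_sum_powers:
  "pcompose g q = (\<Sum>i\<le>degree g. smult (coeff g i) (q ^ i))"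
  unfolding pcompose_altdef poly_altdef
  by (simp add: degree_map_poly coeff_map_poly)

lemma poly_taylor_expansion:
  fixes f :: "'a::comm_ring_1 poly"
  shows "(\<Sum>i\<le>degree (pcompose f [:c, 1:]).
      smult (coeff (pcompose f [:c, 1:]) i) ([:-c, 1:] ^ i)) = f"
proof -
  have "pcompose [:c, 1:] [:-c, 1:] = [:0, 1:]"
    by (simp add: pcompose_pCons)
  then have "pcompose (pcompose f [:c, 1:]) [:-c, 1:] = f"
    by (simp add: pcompose_assoc[symmetric])
  then show ?thesis
    by (simp add: pcompose_eq_sum_powers)
qed

lemma poly_linear_eqI:
  assumes "poly_linear S" "poly_linear T"
    and "\<And>n. S ([:-c, 1:] ^ n) = T ([:-c, 1:] ^ n)"
  shows "S f = T f"
  by (subst (1 2) poly_taylor_expansion[symmetric, of f c]) (simp add: poly_linear_sum assms)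

lemma smult_sum_right: "smult a (\<Sum>i\<in>A. f i) = (\<Sum>i\<in>A. smult a (f i))"
  by (induction A rule: infinite_finite_induct) (simp_all add: smult_add_right)

lemma mult_S_id_eq_sum_atMost:
  assumes "S 0 = 0" "degree P \<le> N"
  shows "mult_S_id S P = (\<Sum>j\<le>N. S (coeff P j) * monom 1 j)"
  unfolding mult_S_id_def
  by (rule sum.mono_neutral_left) (use assms in \<open>auto simp: coeff_eq_0\<close>)

lemma mult_id_S_eq_sum_atMost:
  assumes "degree P \<le> N"
  shows "mult_id_S S P = (\<Sum>j\<le>N. coeff P j * S (monom 1 j))"
  unfolding mult_id_S_def
  by (rule sum.mono_neutral_left) (use assms in \<open>auto simp: coeff_eq_0\<close>)

lemma mult_S_id_add:
  assumes "poly_linear S"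
  shows "mult_S_id S (P + Q) = mult_S_id S P + mult_S_id S Q"
proof -
  let ?N = "max (degree P) (degree Q)"
  have N: "degree (P + Q) \<le> ?N" "degree P \<le> ?N" "degree Q \<le> ?N"
    by (simp_all add: degree_add_le_max)
  note sum_atMost = mult_S_id_eq_sum_atMost[of S, OF poly_linear_0[OF assms]]
  show ?thesis
    unfolding sum_atMost[OF N(1)] sum_atMost[OF N(2)] sum_atMost[OF N(3)]
    using assms by (simp add: poly_linear_def sum.distrib distrib_right)
qed

lemma mult_id_S_add: "mult_id_S S (P + Q) = mult_id_S S P + mult_id_S S Q"
proof -
  let ?N = "max (degree P) (degree Q)"
  have N: "degree (P + Q) \<le> ?N" "degree P \<le> ?N" "degree Q \<le> ?N"
    by (simp_all add: degree_add_le_max)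
  show ?thesis
    unfolding mult_id_S_eq_sum_atMost[OF N(1)] mult_id_S_eq_sum_atMost[OF N(2)]
      mult_id_S_eq_sum_atMost[OF N(3)]
    by (simp add: sum.distrib distrib_right)
qed

lemma mult_S_id_smult:
  assumes "poly_linear S"
  shows "mult_S_id S (smult [:a:] P) = smult a (mult_S_id S P)"
  unfolding mult_S_id_eq_sum_atMost[of S, OF poly_linear_0[OF assms] degree_smult_le]
  using assms by (simp add: mult_S_id_def poly_linear_def smult_sum_right)

lemma mult_id_S_smult: "mult_id_S S (smult [:a:] P) = smult a (mult_id_S S P)"
  unfolding mult_id_S_eq_sum_atMost[OF degree_smult_le]
  by (simp add: mult_id_S_def smult_sum_right)

lemma mult_S_id_sum:
  assumes "poly_linear S"
  shows "mult_S_id S (\<Sum>i\<in>A. P i) = (\<Sum>i\<in>A. mult_S_id S (P i))"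
proof -
  have "mult_S_id S 0 = 0"
    by (simp add: mult_S_id_def poly_linear_0 assms)
  then show ?thesis
    by (induction A rule: infinite_finite_induct) (simp_all add: mult_S_id_add assms)
qed

lemma mult_id_S_sum: "mult_id_S S (\<Sum>i\<in>A. P i) = (\<Sum>i\<in>A. mult_id_S S (P i))"
proof -
  have "mult_id_S S 0 = 0"
    by (simp add: mult_id_S_def)
  then show ?thesis
    by (induction A rule: infinite_finite_induct) (simp_all add: mult_id_S_add)
qed

lemma coeff_lift_x_mult_lift_y [simp]: "coeff (lift_x a * lift_y b) j = smult (coeff b j) a"
  by (simp add: lift_x_def lift_y_def coeff_map_poly)

lemma degree_lift_x_mult_lift_y: "degree (lift_x a * lift_y b) \<le> degree b"
  by (rule degree_le) (simp add: coeff_eq_0)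

lemma mult_S_id_lift_x_mult_lift_y:
  assumes "poly_linear S"
  shows "mult_S_id S (lift_x a * lift_y b) = S a * b"
proof -
  have "mult_S_id S (lift_x a * lift_y b) = (\<Sum>j\<le>degree b. S a * smult (coeff b j) (monom 1 j))"
    unfolding mult_S_id_eq_sum_atMost[of S, OF poly_linear_0[OF assms] degree_lift_x_mult_lift_y]
    using assms by (simp add: poly_linear_def)
  also have "\<dots> = S a * b"
    by (simp only: sum_distrib_left[symmetric] smult_monom mult.right_neutral poly_as_sum_of_monoms)
  finally show ?thesis .
qed

lemma mult_id_S_lift_x_mult_lift_y:
  assumes "poly_linear S"
  shows "mult_id_S S (lift_x a * lift_y b) = a * S b"
proof -
  have "mult_id_S S (lift_x a * lift_y b) = (\<Sum>j\<le>degree b. a * smult (coeff b j) (S (monom 1 j)))"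
    unfolding mult_id_S_eq_sum_atMost[OF degree_lift_x_mult_lift_y] by simp
  also have "\<dots> = a * S (\<Sum>j\<le>degree b. smult (coeff b j) (monom 1 j))"
    by (simp only: poly_linear_sum[OF assms] sum_distrib_left)
  also have "(\<Sum>j\<le>degree b. smult (coeff b j) (monom 1 j)) = b"
    by (simp only: smult_monom mult.right_neutral poly_as_sum_of_monoms)
  finally show ?thesis .
qed

lemma poly_linear_of_nat_mult:
  assumes "poly_linear S"
  shows "S (of_nat m * f) = of_nat m * S f"
  using assms by (simp add: poly_linear_def of_nat_poly)

lemma mult_S_id_shift_xy_power:
  fixes c :: "'a::{idom,ring_char_0}"
  assumes linear: "poly_linear \<omega>" and powers: "\<And>k. \<omega> ([:-c, 1:] ^ k) = (- [:-c, 1:]) ^ k"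
  shows "mult_S_id \<omega> (shift_xy c ([:-c, 1:] ^ n)) = [:poly ([:-c, 1:] ^ n) c:]"
proof -
  let ?u = "[:-c, 1:]"
  have "mult_S_id \<omega> (shift_xy c (?u ^ n)) =
      (\<Sum>k\<le>n. \<omega> (of_nat (n choose k) * ?u ^ k) * ?u ^ (n - k))"
    by (simp add: shift_xy_power_binomial mult_S_id_sum mult_S_id_lift_x_mult_lift_y linear)
  also have "\<dots> = (\<Sum>k\<le>n. of_nat (n choose k) * (- ?u) ^ k * ?u ^ (n - k))"
    by (simp add: poly_linear_of_nat_mult[OF linear] powers)
  also have "\<dots> = (- ?u + ?u) ^ n"
    by (rule binomial_ring[symmetric])
  also have "\<dots> = [:poly (?u ^ n) c:]"
    by (cases n) simp_all
  finally show ?thesis .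
qed

lemma mult_id_S_shift_xy_power:
  fixes c :: "'a::{idom,ring_char_0}"
  assumes linear: "poly_linear \<omega>" and powers: "\<And>k. \<omega> ([:-c, 1:] ^ k) = (- [:-c, 1:]) ^ k"
  shows "mult_id_S \<omega> (shift_xy c ([:-c, 1:] ^ n)) = [:poly ([:-c, 1:] ^ n) c:]"
proof -
  let ?u = "[:-c, 1:]"
  have "mult_id_S \<omega> (shift_xy c (?u ^ n)) =
      (\<Sum>k\<le>n. of_nat (n choose k) * ?u ^ k * \<omega> (?u ^ (n - k)))"
    by (simp add: shift_xy_power_binomial mult_id_S_sum mult_id_S_lift_x_mult_lift_y linear)
  also have "\<dots> = (\<Sum>k\<le>n. of_nat (n choose k) * ?u ^ k * (- ?u) ^ (n - k))"
    by (simp add: powers)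
  also have "\<dots> = (?u + - ?u) ^ n"
    by (rule binomial_ring[symmetric])
  also have "\<dots> = [:poly (?u ^ n) c:]"
    by (cases n) simp_all
  finally show ?thesis .
qed

lemma is_antipode_shift_xy:
  fixes c :: "'a::{idom,ring_char_0}" and \<omega> :: "'a poly \<Rightarrow> 'a poly"
  assumes linear: "poly_linear \<omega>"
    and powers: "\<And>n. \<omega> ([:-c, 1:] ^ n) = (-1) ^ n * [:-c, 1:] ^ n"
  shows "is_antipode (shift_xy c) (\<lambda>f. poly f c) \<omega>"
  unfolding is_antipode_def
proof (intro allI conjI)
  fix f
  have powers': "\<omega> ([:-c, 1:] ^ n) = (- [:-c, 1:]) ^ n" for n
    unfolding powers by (rule power_minus[symmetric])
  have S_id_linear: "poly_linear (\<lambda>f. mult_S_id \<omega> (shift_xy c f))"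
    and id_S_linear: "poly_linear (\<lambda>f. mult_id_S \<omega> (shift_xy c f))"
    and counit_linear: "poly_linear (\<lambda>f. [:poly f c:])"
    using linear by (simp_all add: poly_linear_def mult_S_id_add mult_S_id_smult
        mult_id_S_add mult_id_S_smult)
  show "mult_S_id \<omega> (shift_xy c f) = [:poly f c:]"
    using S_id_linear counit_linear mult_S_id_shift_xy_power[OF linear powers']
    by (rule poly_linear_eqI)
  show "mult_id_S \<omega> (shift_xy c f) = [:poly f c:]"
    using id_S_linear counit_linear mult_id_S_shift_xy_power[OF linear powers']
    by (rule poly_linear_eqI)
qed

theorem corollary2:
  fixes p :: "nat \<Rightarrow> 'a::field_char_0 poly"
    and F :: "'a poly \<Rightarrow> 'a poly poly"
    and eps :: "'a poly \<Rightarrow> 'a"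
  assumes deg: "\<And>n. degree (p n) = n"
    and F_add: "\<And>f g. F (f + g) = F f + F g"
    and F_smult: "\<And>a f. F (smult a f) = smult [:a:] (F f)"
    and F_p: "\<And>n. F (p n) = (\<Sum>k\<le>n. lift_x (p k) * lift_y (p (n - k)))"
    and eps_add: "\<And>f g. eps (f + g) = eps f + eps g"
    and eps_smult: "\<And>a f. eps (smult a f) = a * eps f"
    and eps_p: "\<And>n. eps (p n) = (if n = 0 then 1 else 0)"
    and F_one: "F 1 = 1"
    and F_mult: "\<And>f g. F (f * g) = F f * F g"
    and eps_one: "eps 1 = 1"
    and eps_mult: "\<And>f g. eps (f * g) = eps f * eps g"
  shows "\<exists>c. (\<forall>f. F f = shift_xy c f)
           \<and> sheffer p
           \<and> (\<forall>f. eps f = poly f c)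
           \<and> (\<forall>\<omega>. (\<forall>f g. \<omega> (f + g) = \<omega> f + \<omega> g)
                  \<and> (\<forall>a f. \<omega> (smult a f) = smult a (\<omega> f))
                  \<and> (\<forall>n. \<omega> ([:-c, 1:] ^ n) = (-1) ^ n * [:-c, 1:] ^ n)
                  \<longrightarrow> is_antipode F eps \<omega>)"
proof -
  have F_const: "F [:a:] = [:[:a:]:]" for a
    using F_smult[of a 1] F_one by simp
  have eps_const: "eps [:a:] = a" for a
    using eps_smult[of a 1] eps_one by simp
  obtain b where "p 0 = [:b:]"
    using degree0_coeffs[OF deg[of 0]] ..
  then have p0: "p 0 = 1"
    using eps_p[of 0] eps_const by (simp add: one_pCons)
  obtain a c where "a \<noteq> 0" and p1: "p 1 = smult a [:-c, 1:]"
    using deg[of 1] by (rule degree1_smult_linear)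
  have "F (p 1) = lift_x (p 1) + lift_y (p 1)"
    using F_p[of 1] by (simp add: p0 add.commute)
  then have "smult [:a:] (F [:-c, 1:]) = smult [:a:] (lift_x [:-c, 1:] + lift_y [:-c, 1:])"
    unfolding p1 by (simp only: F_smult lift_x_smult lift_y_smult smult_add_right)
  then have primitive: "F [:-c, 1:] = lift_x [:-c, 1:] + lift_y [:-c, 1:]"
    by (rule smult_cancel[rotated]) (simp add: \<open>a \<noteq> 0\<close>)
  have F: "F f = shift_xy c f" for f
    by (rule poly_hom_eq_shift_xy[OF F_add F_mult F_const primitive])
  have "eps [:-c, 1:] = 0"
    using eps_p[of 1] \<open>a \<noteq> 0\<close> unfolding p1 eps_smult by simp
  then have eps: "eps f = poly f c" for f
    by (rule poly_hom_eq_poly[OF eps_add eps_mult eps_const])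
  have "sheffer p"
    using deg by (rule sheffer_if_shift_xy_expansion[where c = c]) (simp add: F_p F[symmetric])
  moreover have "F = shift_xy c" "eps = (\<lambda>f. poly f c)"
    using F eps by auto
  ultimately show ?thesis
    using is_antipode_shift_xy[of _ c] unfolding poly_linear_def by auto
qed

end
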